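(* Every BL-chain $\mathbf A$ can be isomorphically embedded into a saturated BL-chain $\overline{\mathbf A}$ (identify $\mathbf A$ with its image) such that: (1) every element of $\overline{A}\setminus A$ is idempotent; and (2) if $C\subseteq A$ is such that $\bigwedge^{\mathbf A}C$ exists and is idempotent, then $\bigwedge^{\overline{\mathbf A}}C$ exists and $\bigwedge^{\mathbf A}C=\bigwedge^{\overline{\mathbf A}}C$; likewise, if $\bigvee^{\mathbf A}C$ exists and is idempotent, then $\bigvee^{\overline{\mathbf A}}C$ exists and $\bigvee^{\mathbf A}C=\bigvee^{\overline{\mathbf A}}C$.
   Context: A BL-algebra is an algebra $(A,\cdot,\to,\wedge,\vee,0,1)$ such that $(A,\wedge,\vee,0,1)$ is a bounded lattice, $(A,\cdot,1)$ is a commutative monoid, $x\cdot y\le z$ iff $x\le y\to z$, $x\wedge y=x\cdot(x\to y)$ and $(x\to y)\vee(y\to x)=1$; a BL-chain is a totally ordered BL-algebra. An element $a$ is idempotent if $a\cdot a=a$. A pair $(X,Y)$ of subsets of a BL-chain $A$ is a cut if $X\cup Y=A$, $x\le y$ for all $x\in X$, $y\in Y$, $Y$ is closed under $\cdot$, and $x\cdot y=x$ for all $x\in X$, $y\in Y$. A cut $(X,Y)$ is saturated if there is an idempotent $u\in A$ with $x\le u\le y$ for all $x\in X$, $y\in Y$. A BL-chain is saturated if every cut in it is saturated. $\bigwedge^{\mathbf A}C$, $\bigvee^{\mathbf A}C$ denote infimum and supremum computed in $\mathbf A$. *)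

theory Defs
  imports Main
begin

record 'a bl =
  carrier :: "'a set"
  mult :: "'a \<Rightarrow> 'a \<Rightarrow> 'a"
  imp :: "'a \<Rightarrow> 'a \<Rightarrow> 'a"
  meet :: "'a \<Rightarrow> 'a \<Rightarrow> 'a"
  join :: "'a \<Rightarrow> 'a \<Rightarrow> 'a"
  zero :: "'a"
  one :: "'a"

definition bl_le :: "('a, 'b) bl_scheme \<Rightarrow> 'a \<Rightarrow> 'a \<Rightarrow> bool" where
  "bl_le A x y \<longleftrightarrow> meet A x y = x"

definition bl_algebra :: "('a, 'b) bl_scheme \<Rightarrow> bool" where
  "bl_algebra A \<longleftrightarrow>
     zero A \<in> carrier A \<and> one A \<in> carrier A \<and>
     (\<forall>x\<in>carrier A. \<forall>y\<in>carrier A.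
        mult A x y \<in> carrier A \<and> imp A x y \<in> carrier A \<and>
        meet A x y \<in> carrier A \<and> join A x y \<in> carrier A) \<and>
     \<comment> \<open>lattice axioms\<close>
     (\<forall>x\<in>carrier A. \<forall>y\<in>carrier A. \<forall>z\<in>carrier A.
        meet A x (meet A y z) = meet A (meet A x y) z \<and>
        join A x (join A y z) = join A (join A x y) z) \<and>
     (\<forall>x\<in>carrier A. \<forall>y\<in>carrier A.
        meet A x y = meet A y x \<and> join A x y = join A y x \<and>
        meet A x (join A x y) = x \<and> join A x (meet A x y) = x) \<and>
     \<comment> \<open>boundedness\<close>
     (\<forall>x\<in>carrier A. bl_le A (zero A) x \<and> bl_le A x (one A)) \<and>
     \<comment> \<open>commutative monoid\<close>
     (\<forall>x\<in>carrier A. \<forall>y\<in>carrier A. \<forall>z\<in>carrier A.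
        mult A x (mult A y z) = mult A (mult A x y) z) \<and>
     (\<forall>x\<in>carrier A. \<forall>y\<in>carrier A. mult A x y = mult A y x) \<and>
     (\<forall>x\<in>carrier A. mult A x (one A) = x) \<and>
     \<comment> \<open>residuation\<close>
     (\<forall>x\<in>carrier A. \<forall>y\<in>carrier A. \<forall>z\<in>carrier A.
        bl_le A (mult A x y) z \<longleftrightarrow> bl_le A x (imp A y z)) \<and>
     \<comment> \<open>divisibility\<close>
     (\<forall>x\<in>carrier A. \<forall>y\<in>carrier A. meet A x y = mult A x (imp A x y)) \<and>
     \<comment> \<open>prelinearity\<close>
     (\<forall>x\<in>carrier A. \<forall>y\<in>carrier A. join A (imp A x y) (imp A y x) = one A)"

definition bl_chain :: "('a, 'b) bl_scheme \<Rightarrow> bool" where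
  "bl_chain A \<longleftrightarrow> bl_algebra A \<and>
     (\<forall>x\<in>carrier A. \<forall>y\<in>carrier A. bl_le A x y \<or> bl_le A y x)"

definition bl_idempotent :: "('a, 'b) bl_scheme \<Rightarrow> 'a \<Rightarrow> bool" where
  "bl_idempotent A a \<longleftrightarrow> mult A a a = a"

definition bl_cut :: "('a, 'b) bl_scheme \<Rightarrow> 'a set \<Rightarrow> 'a set \<Rightarrow> bool" where
  "bl_cut A X Y \<longleftrightarrow> X \<union> Y = carrier A \<and>
     (\<forall>x\<in>X. \<forall>y\<in>Y. bl_le A x y) \<and>
     (\<forall>y1\<in>Y. \<forall>y2\<in>Y. mult A y1 y2 \<in> Y) \<and>
     (\<forall>x\<in>X. \<forall>y\<in>Y. mult A x y = x)"

definition saturated_cut :: "('a, 'b) bl_scheme \<Rightarrow> 'a set \<Rightarrow> 'a set \<Rightarrow> bool" where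
  "saturated_cut A X Y \<longleftrightarrow>
     (\<exists>u\<in>carrier A. bl_idempotent A u \<and>
        (\<forall>x\<in>X. bl_le A x u) \<and> (\<forall>y\<in>Y. bl_le A u y))"

definition saturated_chain :: "('a, 'b) bl_scheme \<Rightarrow> bool" where
  "saturated_chain A \<longleftrightarrow> bl_chain A \<and>
     (\<forall>X Y. bl_cut A X Y \<longrightarrow> saturated_cut A X Y)"

definition bl_embedding ::
  "('a, 'c) bl_scheme \<Rightarrow> ('b, 'd) bl_scheme \<Rightarrow> ('a \<Rightarrow> 'b) \<Rightarrow> bool" where
  "bl_embedding A B f \<longleftrightarrow>
     f ` carrier A \<subseteq> carrier B \<and> inj_on f (carrier A) \<and>
     f (zero A) = zero B \<and> f (one A) = one B \<and>
     (\<forall>x\<in>carrier A. \<forall>y\<in>carrier A.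
        f (mult A x y) = mult B (f x) (f y) \<and>
        f (imp A x y) = imp B (f x) (f y) \<and>
        f (meet A x y) = meet B (f x) (f y) \<and>
        f (join A x y) = join B (f x) (f y))"

definition is_bl_inf :: "('a, 'b) bl_scheme \<Rightarrow> 'a set \<Rightarrow> 'a \<Rightarrow> bool" where
  "is_bl_inf A C m \<longleftrightarrow> m \<in> carrier A \<and> (\<forall>c\<in>C. bl_le A m c) \<and>
     (\<forall>z\<in>carrier A. (\<forall>c\<in>C. bl_le A z c) \<longrightarrow> bl_le A z m)"

definition is_bl_sup :: "('a, 'b) bl_scheme \<Rightarrow> 'a set \<Rightarrow> 'a \<Rightarrow> bool" where
  "is_bl_sup A C m \<longleftrightarrow> m \<in> carrier A \<and> (\<forall>c\<in>C. bl_le A c m) \<and>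
     (\<forall>z\<in>carrier A. (\<forall>c\<in>C. bl_le A c z) \<longrightarrow> bl_le A m z)"

end

theory Submission
  imports Defs
begin

text \<open>Fill every gap: for each cut (X, A - X) of A that no idempotent separates, adjoin one new
  element between X and A - X, and compute every product and residuum involving a new element as in
  a Goedel chain (product = minimum, residuum = 1 or the second argument). The new elements are then
  idempotent, and for products mixing old and new elements the BL axioms reduce to the cut condition
  x y = x for x in X and y outside X. A cut of the extension is separated either by an old idempotent
  or by the new element of the cut it induces on A. A new element below all of a set C lies below an
  idempotent infimum m of C: otherwise m would belong to its lower part X and bound X from above,
  i.e. m would be an idempotent separating the cut X. Suprema are dual.\<close>

lemma if_min_max_assoc:
  assumes "x \<in> S" "y \<in> S" "z \<in> S"
    and total: "\<And>a b. a \<in> S \<Longrightarrow> b \<in> S \<Longrightarrow> R a b \<or> R b a"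
    and antisym: "\<And>a b. a \<in> S \<Longrightarrow> b \<in> S \<Longrightarrow> R a b \<Longrightarrow> R b a \<Longrightarrow> a = b"
    and trans: "\<And>a b c. a \<in> S \<Longrightarrow> b \<in> S \<Longrightarrow> c \<in> S \<Longrightarrow> R a b \<Longrightarrow> R b c \<Longrightarrow> R a c"
  shows "(if R x (if R y z then y else z) then x else if R y z then y else z) =
         (if R (if R x y then x else y) z then if R x y then x else y else z)"
    and "(if R x (if R y z then z else y) then if R y z then z else y else x) =
         (if R (if R x y then y else x) z then z else if R x y then y else x)"
  using total[OF assms(1,2)] total[OF assms(2,3)] total[OF assms(1,3)]
    antisym[OF assms(1,2)] antisym[OF assms(2,3)] antisym[OF assms(1,3)]
    trans[OF assms(1,2,3)] trans[OF assms(1,3,2)] trans[OF assms(2,1,3)]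
    trans[OF assms(2,3,1)] trans[OF assms(3,1,2)] trans[OF assms(3,2,1)]
  by (auto split: if_splits)

section \<open>Elementary arithmetic of BL-algebras\<close>

locale BL_algebra =
  fixes A :: "('a, 'b) bl_scheme"
  assumes bl_algebra: "bl_algebra A"
begin

abbreviation le (infix "\<sqsubseteq>" 50) where "x \<sqsubseteq> y \<equiv> bl_le A x y"
abbreviation S where "S \<equiv> carrier A"

lemma zero_closed: "zero A \<in> S"
  and one_closed: "one A \<in> S"
  and mult_closed: "x \<in> S \<Longrightarrow> y \<in> S \<Longrightarrow> mult A x y \<in> S"
  and imp_closed: "x \<in> S \<Longrightarrow> y \<in> S \<Longrightarrow> imp A x y \<in> S"
  and meet_closed: "x \<in> S \<Longrightarrow> y \<in> S \<Longrightarrow> meet A x y \<in> S"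
  using bl_algebra unfolding bl_algebra_def by meson+

lemma meet_assoc: "x \<in> S \<Longrightarrow> y \<in> S \<Longrightarrow> z \<in> S \<Longrightarrow> meet A x (meet A y z) = meet A (meet A x y) z"
  and meet_comm: "x \<in> S \<Longrightarrow> y \<in> S \<Longrightarrow> meet A x y = meet A y x"
  and join_comm: "x \<in> S \<Longrightarrow> y \<in> S \<Longrightarrow> join A x y = join A y x"
  and meet_join_absorb: "x \<in> S \<Longrightarrow> y \<in> S \<Longrightarrow> meet A x (join A x y) = x"
  and join_meet_absorb: "x \<in> S \<Longrightarrow> y \<in> S \<Longrightarrow> join A x (meet A x y) = x"
  and zero_least: "x \<in> S \<Longrightarrow> zero A \<sqsubseteq> x"
  and one_greatest: "x \<in> S \<Longrightarrow> x \<sqsubseteq> one A"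
  and bl_mult_assoc: "x \<in> S \<Longrightarrow> y \<in> S \<Longrightarrow> z \<in> S \<Longrightarrow> mult A x (mult A y z) = mult A (mult A x y) z"
  and bl_mult_comm: "x \<in> S \<Longrightarrow> y \<in> S \<Longrightarrow> mult A x y = mult A y x"
  and bl_mult_one: "x \<in> S \<Longrightarrow> mult A x (one A) = x"
  and residuation: "x \<in> S \<Longrightarrow> y \<in> S \<Longrightarrow> z \<in> S \<Longrightarrow> mult A x y \<sqsubseteq> z \<longleftrightarrow> x \<sqsubseteq> imp A y z"
  and divisibility: "x \<in> S \<Longrightarrow> y \<in> S \<Longrightarrow> meet A x y = mult A x (imp A x y)"
  and prelinearity: "x \<in> S \<Longrightarrow> y \<in> S \<Longrightarrow> join A (imp A x y) (imp A y x) = one A"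
  using bl_algebra unfolding bl_algebra_def by meson+

lemma bl_le_refl: "x \<in> S \<Longrightarrow> x \<sqsubseteq> x"
  using meet_join_absorb[of x "meet A x x"] join_meet_absorb[of x x] meet_closed
  by (simp add: bl_le_def)

lemma bl_le_antisym: "x \<in> S \<Longrightarrow> y \<in> S \<Longrightarrow> x \<sqsubseteq> y \<Longrightarrow> y \<sqsubseteq> x \<Longrightarrow> x = y"
  unfolding bl_le_def using meet_comm by metis

lemma bl_le_trans: "x \<in> S \<Longrightarrow> y \<in> S \<Longrightarrow> z \<in> S \<Longrightarrow> x \<sqsubseteq> y \<Longrightarrow> y \<sqsubseteq> z \<Longrightarrow> x \<sqsubseteq> z"
  unfolding bl_le_def using meet_assoc by metis

lemma join_if_le: "x \<in> S \<Longrightarrow> y \<in> S \<Longrightarrow> x \<sqsubseteq> y \<Longrightarrow> join A x y = y"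
  using join_meet_absorb meet_comm join_comm unfolding bl_le_def by metis

lemma bl_mult_mono: "x \<in> S \<Longrightarrow> y \<in> S \<Longrightarrow> z \<in> S \<Longrightarrow> x \<sqsubseteq> y \<Longrightarrow> mult A x z \<sqsubseteq> mult A y z"
  using residuation[of y z "mult A y z"] residuation[of x z "mult A y z"]
    bl_le_refl bl_le_trans[of x y "imp A z (mult A y z)"] mult_closed imp_closed by metis

lemma bl_mult_le_left: "x \<in> S \<Longrightarrow> y \<in> S \<Longrightarrow> mult A x y \<sqsubseteq> x"
  using bl_mult_mono[of y "one A" x] one_greatest one_closed bl_mult_one bl_mult_comm by metis

lemma bl_le_imp: "y \<in> S \<Longrightarrow> z \<in> S \<Longrightarrow> z \<sqsubseteq> imp A y z"
  using bl_mult_le_left residuation by blast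

lemma imp_eq_one: "x \<in> S \<Longrightarrow> y \<in> S \<Longrightarrow> x \<sqsubseteq> y \<Longrightarrow> imp A x y = one A"
  using residuation[of "one A" x y] bl_mult_one bl_mult_comm one_closed one_greatest bl_le_antisym imp_closed
  by metis

lemma zero_idempotent: "bl_idempotent A (zero A)"
  using bl_le_antisym bl_mult_le_left zero_least zero_closed mult_closed
  unfolding bl_idempotent_def by metis

lemma one_idempotent: "bl_idempotent A (one A)"
  using bl_mult_one one_closed unfolding bl_idempotent_def by blast

end

locale BL_chain = BL_algebra +
  assumes bl_le_total: "x \<in> S \<Longrightarrow> y \<in> S \<Longrightarrow> x \<sqsubseteq> y \<or> y \<sqsubseteq> x"
begin

lemma meet_eq: "x \<in> S \<Longrightarrow> y \<in> S \<Longrightarrow> meet A x y = (if x \<sqsubseteq> y then x else y)"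
  using bl_le_total meet_comm unfolding bl_le_def by metis

lemma join_eq: "x \<in> S \<Longrightarrow> y \<in> S \<Longrightarrow> join A x y = (if x \<sqsubseteq> y then y else x)"
  using join_if_le join_meet_absorb meet_eq by metis

lemma mult_imp_eq: "x \<in> S \<Longrightarrow> y \<in> S \<Longrightarrow> \<not> x \<sqsubseteq> y \<Longrightarrow> mult A x (imp A x y) = y"
  using divisibility meet_eq by metis

end

section \<open>The saturation of a BL-chain\<close>

text \<open>Two parts of a cut that share an element are separated by it, as it is idempotent; so an
  unsaturated cut (X, Y) has Y = carrier A - X and is represented by X.\<close>

definition unsaturated_cuts :: "('a, 'b) bl_scheme \<Rightarrow> 'a set set" where
  "unsaturated_cuts A = {X. X \<subseteq> carrier A \<and> bl_cut A X (carrier A - X) \<and>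
                            \<not> saturated_cut A X (carrier A - X)}"

text \<open>The element Inr X is the new idempotent filling the gap of the unsaturated cut X.\<close>

fun sat_le :: "('a, 'b) bl_scheme \<Rightarrow> 'a + 'a set \<Rightarrow> 'a + 'a set \<Rightarrow> bool" where
  "sat_le A (Inl a) (Inl b) = bl_le A a b"
| "sat_le A (Inl a) (Inr X) = (a \<in> X)"
| "sat_le A (Inr X) (Inl b) = (b \<notin> X)"
| "sat_le A (Inr X) (Inr Z) = (X \<subseteq> Z)"

fun sat_mult :: "('a, 'b) bl_scheme \<Rightarrow> 'a + 'a set \<Rightarrow> 'a + 'a set \<Rightarrow> 'a + 'a set" where
  "sat_mult A (Inl a) (Inl b) = Inl (mult A a b)"
| "sat_mult A p q = (if sat_le A p q then p else q)"

fun sat_imp :: "('a, 'b) bl_scheme \<Rightarrow> 'a + 'a set \<Rightarrow> 'a + 'a set \<Rightarrow> 'a + 'a set" where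
  "sat_imp A (Inl a) (Inl b) = Inl (imp A a b)"
| "sat_imp A p q = (if sat_le A p q then Inl (one A) else q)"

definition saturation :: "('a, 'b) bl_scheme \<Rightarrow> ('a + 'a set) bl" where
  "saturation A = \<lparr>carrier = Inl ` carrier A \<union> Inr ` unsaturated_cuts A,
     mult = sat_mult A, imp = sat_imp A,
     meet = \<lambda>p q. if sat_le A p q then p else q,
     join = \<lambda>p q. if sat_le A p q then q else p,
     zero = Inl (zero A), one = Inl (one A)\<rparr>"

lemma saturation_simps [simp]:
  "carrier (saturation A) = Inl ` carrier A \<union> Inr ` unsaturated_cuts A"
  "mult (saturation A) = sat_mult A" "imp (saturation A) = sat_imp A"
  "meet (saturation A) = (\<lambda>p q. if sat_le A p q then p else q)"
  "join (saturation A) = (\<lambda>p q. if sat_le A p q then q else p)"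
  "zero (saturation A) = Inl (zero A)" "one (saturation A) = Inl (one A)"
  by (simp_all add: saturation_def)

lemma Inl_Inr_image_iff [simp]:
  "Inl a \<in> Inl ` B \<longleftrightarrow> a \<in> B" "Inl a \<notin> Inr ` C" "Inr X \<in> Inr ` C \<longleftrightarrow> X \<in> C" "Inr X \<notin> Inl ` B"
  by auto

lemma sat_mult_new: "\<not> (\<exists>a b. p = Inl a \<and> q = Inl b) \<Longrightarrow> sat_mult A p q = (if sat_le A p q then p else q)"
  by (cases p; cases q) auto

lemma sat_imp_new: "\<not> (\<exists>a b. p = Inl a \<and> q = Inl b) \<Longrightarrow> sat_imp A p q = (if sat_le A p q then Inl (one A) else q)"
  by (cases p; cases q) auto

context BL_chain
begin

abbreviation U where "U \<equiv> unsaturated_cuts A"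

lemma unsaturated_cutD:
  assumes "X \<in> U"
  shows "X \<subseteq> S"
    and "a \<in> X \<Longrightarrow> b \<in> S \<Longrightarrow> b \<notin> X \<Longrightarrow> a \<sqsubseteq> b"
    and "a \<in> S \<Longrightarrow> a \<notin> X \<Longrightarrow> b \<in> S \<Longrightarrow> b \<notin> X \<Longrightarrow> mult A a b \<notin> X"
    and "a \<in> X \<Longrightarrow> b \<in> S \<Longrightarrow> b \<notin> X \<Longrightarrow> mult A a b = a"
  using assms unfolding unsaturated_cuts_def bl_cut_def by blast+

lemma unsaturated_cut_no_idempotent:
  assumes "X \<in> U" "e \<in> S" "bl_idempotent A e" "\<forall>x\<in>X. x \<sqsubseteq> e" "\<forall>y\<in>S - X. e \<sqsubseteq> y"
  shows False
proof -
  have "saturated_cut A X (S - X)"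
    unfolding saturated_cut_def using assms(2-5) by blast
  with assms(1) show False
    unfolding unsaturated_cuts_def by blast
qed

lemma unsaturated_cut_down_closed:
  assumes "X \<in> U" "a \<in> X" "b \<in> S" "b \<sqsubseteq> a"
  shows "b \<in> X"
proof (rule ccontr)
  assume "b \<notin> X"
  then have "a \<sqsubseteq> b" using unsaturated_cutD(2) assms by blast
  then have "a = b" using bl_le_antisym assms unsaturated_cutD(1) by blast
  with assms(2) \<open>b \<notin> X\<close> show False by simp
qed

lemma zero_in_unsaturated_cut: "X \<in> U \<Longrightarrow> zero A \<in> X"
  using unsaturated_cut_no_idempotent[of X "zero A"] unsaturated_cutD(2)[of X _ "zero A"]
    zero_closed zero_idempotent zero_least by blast

lemma one_notin_unsaturated_cut: "X \<in> U \<Longrightarrow> one A \<notin> X"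
  using unsaturated_cut_no_idempotent[of X "one A"] unsaturated_cutD(1)[of X]
    unsaturated_cutD(2)[of X "one A"] one_closed one_idempotent one_greatest by blast

abbreviation Sat where "Sat \<equiv> Inl ` S \<union> Inr ` U"
abbreviation sle (infix "\<preceq>" 50) where "p \<preceq> q \<equiv> sat_le A p q"
abbreviation smult (infixl "\<odot>" 70) where "p \<odot> q \<equiv> sat_mult A p q"

lemma sat_le_refl: "p \<in> Sat \<Longrightarrow> p \<preceq> p"
  by (auto simp: bl_le_refl)

lemma sat_le_antisym: "p \<in> Sat \<Longrightarrow> q \<in> Sat \<Longrightarrow> p \<preceq> q \<Longrightarrow> q \<preceq> p \<Longrightarrow> p = q"
  by (auto simp: bl_le_antisym)

lemma unsaturated_cuts_chain:
  assumes "X \<in> U" "Z \<in> U"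
  shows "X \<subseteq> Z \<or> Z \<subseteq> X"
proof (rule ccontr)
  assume "\<not> (X \<subseteq> Z \<or> Z \<subseteq> X)"
  then obtain a b where ab: "a \<in> X" "a \<notin> Z" "b \<in> Z" "b \<notin> X" by blast
  moreover have "a \<in> S" "b \<in> S" using ab assms unsaturated_cutD(1) by blast+
  ultimately have "a \<sqsubseteq> b" "b \<sqsubseteq> a" using assms unsaturated_cutD(2) by blast+
  with \<open>a \<in> S\<close> \<open>b \<in> S\<close> ab show False using bl_le_antisym by blast
qed

lemma sat_le_total: "p \<in> Sat \<Longrightarrow> q \<in> Sat \<Longrightarrow> p \<preceq> q \<or> q \<preceq> p"
  by (cases p; cases q) (auto simp: bl_le_total unsaturated_cuts_chain)

lemma sat_le_trans: "p \<in> Sat \<Longrightarrow> q \<in> Sat \<Longrightarrow> r \<in> Sat \<Longrightarrow> p \<preceq> q \<Longrightarrow> q \<preceq> r \<Longrightarrow> p \<preceq> r"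
proof (cases p; cases q; cases r)
  fix X b Z assume "p = Inr X" "q = Inl b" "r = Inr Z"
    and "p \<in> Sat" "q \<in> Sat" "r \<in> Sat" "p \<preceq> q" "q \<preceq> r"
  then show "p \<preceq> r"
    using unsaturated_cutD(1)[of X] unsaturated_cutD(2)[of X _ b] unsaturated_cut_down_closed[of Z b] by auto
qed (auto intro: bl_le_trans unsaturated_cut_down_closed unsaturated_cutD(2))

lemma sat_le_one: "p \<in> Sat \<Longrightarrow> p \<preceq> Inl (one A)"
  by (auto simp: one_greatest one_notin_unsaturated_cut)

lemma sat_zero_le: "p \<in> Sat \<Longrightarrow> Inl (zero A) \<preceq> p"
  by (auto simp: zero_least zero_in_unsaturated_cut)

lemma sat_mult_closed: "p \<in> Sat \<Longrightarrow> q \<in> Sat \<Longrightarrow> p \<odot> q \<in> Sat"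
  by (cases p; cases q) (auto simp: mult_closed)

lemma sat_imp_closed: "p \<in> Sat \<Longrightarrow> q \<in> Sat \<Longrightarrow> sat_imp A p q \<in> Sat"
  by (cases p; cases q) (auto simp: imp_closed one_closed)

lemma sat_min_comm: "p \<in> Sat \<Longrightarrow> q \<in> Sat \<Longrightarrow> (if p \<preceq> q then p else q) = (if q \<preceq> p then q else p)"
  using sat_le_antisym[of p q] sat_le_total[of p q] by auto

lemma sat_max_comm: "p \<in> Sat \<Longrightarrow> q \<in> Sat \<Longrightarrow> (if p \<preceq> q then q else p) = (if q \<preceq> p then p else q)"
  using sat_le_antisym[of p q] sat_le_total[of p q] by auto

lemma sat_mult_comm:
  assumes "p \<in> Sat" "q \<in> Sat"
  shows "p \<odot> q = q \<odot> p"
proof (cases "\<exists>a b. p = Inl a \<and> q = Inl b")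
  case False
  moreover have "\<not> (\<exists>a b. q = Inl a \<and> p = Inl b)" using False by blast
  ultimately show ?thesis using sat_mult_new sat_min_comm[OF assms] by metis
qed (use assms in \<open>auto simp: bl_mult_comm\<close>)

lemma sat_mult_le_left: "p \<in> Sat \<Longrightarrow> q \<in> Sat \<Longrightarrow> p \<odot> q \<preceq> p"
  using sat_le_total[of p q] sat_le_refl[of p] by (cases p; cases q) (auto simp: bl_mult_le_left)

lemma sat_mult_le_right: "p \<in> Sat \<Longrightarrow> q \<in> Sat \<Longrightarrow> p \<odot> q \<preceq> q"
  using sat_mult_le_left sat_mult_comm by metis

lemma sat_mult_one: "p \<in> Sat \<Longrightarrow> p \<odot> Inl (one A) = p"
  by (cases p) (auto simp: bl_mult_one one_notin_unsaturated_cut)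

lemma sat_mult_absorb_below_new:
  assumes "X \<in> U" "q \<in> Sat" "r \<in> Sat" "r \<preceq> Inr X" "\<not> q \<preceq> Inr X"
  shows "q \<odot> r = r"
proof (cases "\<exists>a b. q = Inl a \<and> r = Inl b")
  case True
  then obtain a b where "q = Inl a" "r = Inl b" by blast
  with assms show ?thesis using unsaturated_cutD(4)[of X b a] bl_mult_comm by simp
next
  case False
  have "Inr X \<preceq> q" using sat_le_total[of q "Inr X"] assms by simp
  then have "r \<preceq> q" using sat_le_trans[of r "Inr X" q] assms by simp
  with False assms show ?thesis using sat_le_antisym[of q r] by (auto simp: sat_mult_new)
qed

lemma sat_mult_above_new:
  assumes "X \<in> U" "q \<in> Sat" "r \<in> Sat" "\<not> q \<preceq> Inr X" "\<not> r \<preceq> Inr X"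
  shows "\<not> q \<odot> r \<preceq> Inr X"
proof (cases "\<exists>a b. q = Inl a \<and> r = Inl b")
  case True
  then obtain a b where "q = Inl a" "r = Inl b" by blast
  with assms show ?thesis using unsaturated_cutD(3)[of X a b] by simp
next
  case False
  with assms show ?thesis by (simp add: sat_mult_new)
qed

lemma sat_mult_assoc_new:
  assumes "X \<in> U" "q \<in> Sat" "r \<in> Sat"
  shows "(Inr X \<odot> q) \<odot> r = Inr X \<odot> (q \<odot> r)"
proof -
  let ?u = "Inr X"
  have u: "?u \<in> Sat" using assms by simp
  have qr: "q \<odot> r \<in> Sat" using sat_mult_closed assms by blast
  have u_mult: "?u \<odot> p = (if ?u \<preceq> p then ?u else p)" for p
    by (cases p) auto
  show ?thesis
  proof (cases "q \<preceq> ?u")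
    case True
    then have "?u \<odot> q = q" using u_mult[of q] sat_le_antisym[of ?u q] assms by auto
    moreover have "q \<odot> r \<preceq> ?u"
      using sat_mult_le_left[of q r] sat_le_trans[of _ q ?u] True assms qr u by blast
    ultimately show ?thesis using u_mult[of "q \<odot> r"] sat_le_antisym[of ?u "q \<odot> r"] u qr by auto
  next
    case False
    then have uq: "?u \<odot> q = ?u" using u_mult[of q] sat_le_total[of q ?u] assms by auto
    show ?thesis
    proof (cases "r \<preceq> ?u")
      case True
      then show ?thesis using uq sat_mult_absorb_below_new[of X q r] assms False by simp
    next
      case r_above: False
      have "\<not> q \<odot> r \<preceq> ?u" using sat_mult_above_new[of X q r] assms False r_above by simp
      then have "?u \<preceq> q \<odot> r" using sat_le_total qr u by blast
      moreover have "?u \<preceq> r" using sat_le_total assms u r_above by blast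
      ultimately show ?thesis using uq u_mult by simp
    qed
  qed
qed

lemma sat_mult_assoc:
  assumes "p \<in> Sat" "q \<in> Sat" "r \<in> Sat"
  shows "p \<odot> (q \<odot> r) = (p \<odot> q) \<odot> r"
proof (cases p)
  case (Inr X)
  then show ?thesis using sat_mult_assoc_new[of X q r] assms by simp
next
  case p: (Inl a)
  show ?thesis
  proof (cases q)
    case (Inr Y)
    then have Y: "Y \<in> U" using assms by simp
    have "(p \<odot> q) \<odot> r = (q \<odot> p) \<odot> r" using sat_mult_comm assms by simp
    also have "\<dots> = q \<odot> (p \<odot> r)" using sat_mult_assoc_new[of Y p r] Inr Y assms by simp
    also have "\<dots> = q \<odot> (r \<odot> p)" using sat_mult_comm assms by simp
    also have "\<dots> = (q \<odot> r) \<odot> p" using sat_mult_assoc_new[of Y r p] Inr Y assms by simp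
    also have "\<dots> = p \<odot> (q \<odot> r)" using sat_mult_comm assms sat_mult_closed by simp
    finally show ?thesis by simp
  next
    case q: (Inl b)
    show ?thesis
    proof (cases r)
      case (Inr Z)
      then have Z: "Z \<in> U" using assms by simp
      have "p \<odot> (q \<odot> r) = (r \<odot> q) \<odot> p" using sat_mult_comm assms sat_mult_closed by simp
      also have "\<dots> = r \<odot> (q \<odot> p)" using sat_mult_assoc_new[of Z q p] Inr Z assms by simp
      also have "\<dots> = (p \<odot> q) \<odot> r" using sat_mult_comm assms sat_mult_closed by simp
      finally show ?thesis .
    qed (use p q assms in \<open>simp add: bl_mult_assoc\<close>)
  qed
qed

lemma sat_residuation_new_old:
  assumes "X \<in> U" "b \<in> S" "c \<in> S"
  shows "Inr X \<odot> Inl b \<preceq> Inl c \<longleftrightarrow> Inr X \<preceq> sat_imp A (Inl b) (Inl c)"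
proof (cases "b \<sqsubseteq> c")
  case True
  then have "b \<notin> X \<Longrightarrow> c \<notin> X" using unsaturated_cut_down_closed[of X c b] assms by blast
  with True assms show ?thesis using imp_eq_one one_notin_unsaturated_cut by auto
next
  case b_above: False
  have bc: "imp A b c \<in> S" using imp_closed assms by blast
  show ?thesis
  proof (cases "b \<in> X")
    case True
    have "imp A b c \<in> X"
    proof (rule ccontr)
      assume "imp A b c \<notin> X"
      then have "mult A b (imp A b c) = b" using unsaturated_cutD(4) assms True bc by blast
      then have "c = b" using mult_imp_eq[of b c] assms b_above by simp
      then show False using b_above bl_le_refl assms by blast
    qed
    with True b_above show ?thesis by simp
  next
    case False
    have "c \<notin> X \<longleftrightarrow> imp A b c \<notin> X"
    proof
      assume "c \<notin> X"
      then show "imp A b c \<notin> X"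
        using unsaturated_cut_down_closed[of X "imp A b c" c] bl_le_imp assms bc by blast
    next
      assume "imp A b c \<notin> X"
      then have "mult A b (imp A b c) \<notin> X" using unsaturated_cutD(3) assms False bc by blast
      then show "c \<notin> X" using mult_imp_eq[of b c] assms b_above by simp
    qed
    with False show ?thesis by simp
  qed
qed

lemma sat_mult_le_new_iff:
  assumes "p \<in> Sat" "q \<in> Sat" "r \<in> Sat" "\<not> (\<exists>b c. q = Inl b \<and> r = Inl c)" "\<not> q \<preceq> r"
  shows "p \<odot> q \<preceq> r \<longleftrightarrow> p \<preceq> r"
proof
  assume pq: "p \<odot> q \<preceq> r"
  show "p \<preceq> r"
  proof (rule ccontr)
    assume p_above: "\<not> p \<preceq> r"
    show False
    proof (cases r)
      case (Inr Z)
      then show False using sat_mult_above_new[of Z p q] assms p_above pq by simp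
    next
      case (Inl c)
      then obtain Y where "q = Inr Y" using assms(4) by (cases q) auto
      then have "p \<odot> q = (if p \<preceq> q then p else q)" by (cases p) auto
      then show False using pq p_above assms(5) by (auto split: if_splits)
    qed
  qed
next
  assume "p \<preceq> r"
  then show "p \<odot> q \<preceq> r"
    using sat_le_trans[OF sat_mult_closed[OF assms(1,2)] assms(1,3) sat_mult_le_left[OF assms(1,2)]] by blast
qed

lemma sat_residuation:
  assumes "p \<in> Sat" "q \<in> Sat" "r \<in> Sat"
  shows "p \<odot> q \<preceq> r \<longleftrightarrow> p \<preceq> sat_imp A q r"
proof (cases "\<exists>b c. q = Inl b \<and> r = Inl c")
  case True
  then obtain b c where bc: "q = Inl b" "r = Inl c" by blast
  show ?thesis
  proof (cases p)
    case (Inl a)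
    then show ?thesis using bc assms residuation[of a b c] by simp
  next
    case (Inr X)
    then show ?thesis using bc assms sat_residuation_new_old[of X b c] by simp
  qed
next
  case False
  then have imp: "sat_imp A q r = (if q \<preceq> r then Inl (one A) else r)" by (rule sat_imp_new)
  show ?thesis
  proof (cases "q \<preceq> r")
    case True
    then show ?thesis using imp sat_le_one assms
        sat_le_trans[OF sat_mult_closed[OF assms(1,2)] _ _ sat_mult_le_right] by auto
  next
    case False
    then show ?thesis using imp sat_mult_le_new_iff[OF assms \<open>\<not> (\<exists>b c. q = Inl b \<and> r = Inl c)\<close>] by simp
  qed
qed

lemma sat_divisibility:
  assumes "p \<in> Sat" "q \<in> Sat"
  shows "(if p \<preceq> q then p else q) = p \<odot> sat_imp A p q"
proof (cases "\<exists>a b. p = Inl a \<and> q = Inl b")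
  case True
  then obtain a b where "p = Inl a" "q = Inl b" by blast
  moreover from this assms have "a \<in> S" "b \<in> S" by auto
  ultimately show ?thesis using divisibility[of a b] meet_eq[of a b] by (cases "a \<sqsubseteq> b") simp_all
next
  case False
  then have "sat_imp A p q = (if p \<preceq> q then Inl (one A) else q)" by (rule sat_imp_new)
  moreover have "p \<odot> q = (if p \<preceq> q then p else q)" using False by (rule sat_mult_new)
  ultimately show ?thesis using assms sat_mult_one by simp
qed

lemma sat_prelinearity:
  assumes "p \<in> Sat" "q \<in> Sat"
  shows "(if sat_imp A p q \<preceq> sat_imp A q p then sat_imp A q p else sat_imp A p q) = Inl (one A)"
proof (cases "\<exists>a b. p = Inl a \<and> q = Inl b")
  case True
  then obtain a b where "p = Inl a" "q = Inl b" by blast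
  moreover from this assms have "a \<in> S" "b \<in> S" by auto
  moreover note prelinearity[of a b] join_eq[of "imp A a b" "imp A b a"] imp_closed[of a b] imp_closed[of b a]
  ultimately show ?thesis by (cases "imp A a b \<sqsubseteq> imp A b a") simp_all
next
  case False
  have pq: "sat_imp A p q = (if p \<preceq> q then Inl (one A) else q)" using False by (rule sat_imp_new)
  have qp: "sat_imp A q p = (if q \<preceq> p then Inl (one A) else p)" using False by (intro sat_imp_new) blast
  have one: "Inl (one A) \<in> Sat" using one_closed by simp
  show ?thesis
  proof (cases "p \<preceq> q")
    case True
    have "sat_imp A q p \<preceq> Inl (one A)" using sat_le_one sat_imp_closed assms by blast
    then show ?thesis using True pq sat_le_antisym[OF sat_imp_closed[OF assms(2,1)] one] by auto
  next
    case False
    then have "q \<preceq> p" using sat_le_total assms by blast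
    then show ?thesis using False pq qp sat_le_one assms by simp
  qed
qed

section \<open>The saturation is a saturated BL-chain\<close>

lemma bl_le_saturation: "p \<in> Sat \<Longrightarrow> q \<in> Sat \<Longrightarrow> bl_le (saturation A) p q \<longleftrightarrow> p \<preceq> q"
  unfolding bl_le_def using sat_le_refl by auto

lemmas sat_min_assoc = if_min_max_assoc(1)[where S = Sat and R = "sat_le A", OF _ _ _ sat_le_total sat_le_antisym sat_le_trans]
  and sat_max_assoc = if_min_max_assoc(2)[where S = Sat and R = "sat_le A", OF _ _ _ sat_le_total sat_le_antisym sat_le_trans]

lemma saturation_bl_algebra: "bl_algebra (saturation A)"
  unfolding bl_algebra_def saturation_simps
proof (intro conjI ballI)
  fix p q r assume p: "p \<in> Sat" and q: "q \<in> Sat" and r: "r \<in> Sat"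
  show "p \<odot> q \<in> Sat" by (rule sat_mult_closed[OF p q])
  show "sat_imp A p q \<in> Sat" by (rule sat_imp_closed[OF p q])
  show "p \<odot> (q \<odot> r) = p \<odot> q \<odot> r" by (rule sat_mult_assoc[OF p q r])
  show "bl_le (saturation A) (p \<odot> q) r \<longleftrightarrow> bl_le (saturation A) p (sat_imp A q r)"
    using bl_le_saturation[OF sat_mult_closed[OF p q] r] bl_le_saturation[OF p sat_imp_closed[OF q r]]
      sat_residuation[OF p q r] by simp
  show "(if p \<preceq> (if q \<preceq> r then q else r) then p else if q \<preceq> r then q else r) =
        (if (if p \<preceq> q then p else q) \<preceq> r then if p \<preceq> q then p else q else r)"
    by (rule sat_min_assoc[OF p q r])
  show "(if p \<preceq> (if q \<preceq> r then r else q) then if q \<preceq> r then r else q else p) =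
        (if (if p \<preceq> q then q else p) \<preceq> r then r else if p \<preceq> q then q else p)"
    by (rule sat_max_assoc[OF p q r])
next
  fix p q assume p: "p \<in> Sat" and q: "q \<in> Sat"
  show "(if p \<preceq> q then p else q) \<in> Sat" "(if p \<preceq> q then q else p) \<in> Sat" using p q by simp_all
  show "(if p \<preceq> q then p else q) = (if q \<preceq> p then q else p)" by (rule sat_min_comm[OF p q])
  show "(if p \<preceq> q then q else p) = (if q \<preceq> p then p else q)" by (rule sat_max_comm[OF p q])
  show "(if p \<preceq> (if p \<preceq> q then q else p) then p else if p \<preceq> q then q else p) = p"
    "(if p \<preceq> (if p \<preceq> q then p else q) then if p \<preceq> q then p else q else p) = p"
    using sat_le_refl p by simp_all
  show "p \<odot> q = q \<odot> p" by (rule sat_mult_comm[OF p q])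
  show "(if p \<preceq> q then p else q) = p \<odot> sat_imp A p q" by (rule sat_divisibility[OF p q])
  show "(if sat_imp A p q \<preceq> sat_imp A q p then sat_imp A q p else sat_imp A p q) = Inl (one A)"
    by (rule sat_prelinearity[OF p q])
next
  fix p assume p: "p \<in> Sat"
  show "bl_le (saturation A) (Inl (zero A)) p" "bl_le (saturation A) p (Inl (one A))"
    using bl_le_saturation[OF _ p, of "Inl (zero A)"] bl_le_saturation[OF p, of "Inl (one A)"]
      sat_zero_le[OF p] sat_le_one[OF p] zero_closed one_closed by simp_all
  show "p \<odot> Inl (one A) = p" by (rule sat_mult_one[OF p])
qed (simp_all add: zero_closed one_closed)

lemma saturation_bl_chain: "bl_chain (saturation A)"
  unfolding bl_chain_def using saturation_bl_algebra bl_le_saturation sat_le_total by simp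

context
  fixes X' Y' :: "('a + 'a set) set"
  assumes cut: "bl_cut (saturation A) X' Y'"
begin

abbreviation lower where "lower \<equiv> {a \<in> S. Inl a \<in> X'}"

lemma cut_covers: "X' \<union> Y' = Sat"
  using cut unfolding bl_cut_def by simp

lemma cut_le:
  assumes "x \<in> X'" "y \<in> Y'"
  shows "x \<preceq> y"
proof -
  have "x \<in> Sat" "y \<in> Sat" using cut_covers assms by blast+
  moreover have "bl_le (saturation A) x y" using cut assms unfolding bl_cut_def by blast
  ultimately show ?thesis using bl_le_saturation by blast
qed

lemma cut_absorb:
  assumes "x \<in> X'" "y \<in> Y'"
  shows "x \<odot> y = x"
proof -
  have "\<forall>x\<in>X'. \<forall>y\<in>Y'. mult (saturation A) x y = x" using cut unfolding bl_cut_def by blast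
  then show ?thesis using assms by simp
qed

lemma cut_mult_closed:
  assumes "y1 \<in> Y'" "y2 \<in> Y'"
  shows "y1 \<odot> y2 \<in> Y'"
proof -
  have "\<forall>y1\<in>Y'. \<forall>y2\<in>Y'. mult (saturation A) y1 y2 \<in> Y'" using cut unfolding bl_cut_def by blast
  then show ?thesis using assms by simp
qed

context
  assumes disjoint: "X' \<inter> Y' = {}"
begin

lemma Inl_in_upper:
  assumes "a \<in> S"
  shows "a \<notin> lower \<longleftrightarrow> Inl a \<in> Y'"
proof -
  have "Inl a \<in> X' \<union> Y'" using cut_covers assms by simp
  then show ?thesis using disjoint assms by blast
qed

lemma lower_cut: "bl_cut A lower (S - lower)"
  unfolding bl_cut_def
proof (intro conjI ballI)
  fix x y assume x: "x \<in> lower" and y: "y \<in> S - lower"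
  then have "Inl x \<in> X'" "Inl y \<in> Y'" using Inl_in_upper by auto
  moreover from this have "Inl x \<odot> Inl y = Inl x" by (rule cut_absorb)
  ultimately show "x \<sqsubseteq> y" "mult A x y = x" using cut_le[of "Inl x" "Inl y"] by auto
next
  fix y1 y2 assume y: "y1 \<in> S - lower" "y2 \<in> S - lower"
  then have "Inl y1 \<in> Y'" "Inl y2 \<in> Y'" using Inl_in_upper by auto
  then have "Inl y1 \<odot> Inl y2 \<in> Y'" by (rule cut_mult_closed)
  moreover have "mult A y1 y2 \<in> S" using y mult_closed by blast
  ultimately show "mult A y1 y2 \<in> S - lower" using Inl_in_upper by simp
qed blast

lemma cut_separated_by_new:
  assumes "lower \<in> U"
  shows "(\<forall>x\<in>X'. x \<preceq> Inr lower) \<and> (\<forall>y\<in>Y'. Inr lower \<preceq> y)"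
proof (intro conjI ballI)
  fix x assume x: "x \<in> X'"
  show "x \<preceq> Inr lower"
  proof (cases x)
    case (Inl a)
    then show ?thesis using x cut_covers by auto
  next
    case (Inr Z)
    then have "Z \<in> U" using x cut_covers by auto
    have "Z \<subseteq> lower"
    proof
      fix a assume a: "a \<in> Z"
      show "a \<in> lower"
      proof (rule ccontr)
        assume "a \<notin> lower"
        then have "Inl a \<in> Y'" using Inl_in_upper unsaturated_cutD(1) \<open>Z \<in> U\<close> a by blast
        then have "Inr Z \<preceq> Inl a" using cut_le x Inr by blast
        then show False using a by simp
      qed
    qed
    then show ?thesis using Inr by simp
  qed
next
  fix y assume y: "y \<in> Y'"
  show "Inr lower \<preceq> y"
  proof (cases y)
    case (Inl b)
    then show ?thesis using y disjoint by auto
  next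
    case (Inr Z)
    have "lower \<subseteq> Z"
    proof
      fix a assume "a \<in> lower"
      then have "Inl a \<preceq> y" using cut_le y by blast
      then show "a \<in> Z" using Inr by simp
    qed
    then show ?thesis using Inr by simp
  qed
qed

lemma cut_separated_by_old:
  assumes e: "e \<in> S" "bl_idempotent A e" "\<forall>x\<in>lower. x \<sqsubseteq> e" "\<forall>y\<in>S - lower. e \<sqsubseteq> y"
  shows "(\<forall>x\<in>X'. x \<preceq> Inl e) \<and> (\<forall>y\<in>Y'. Inl e \<preceq> y)"
proof (intro conjI ballI)
  fix x assume x: "x \<in> X'"
  show "x \<preceq> Inl e"
  proof (cases "Inl e \<in> Y'")
    case True
    then show ?thesis using cut_le x by blast
  next
    case False
    then have "e \<in> lower" using Inl_in_upper e(1) by blast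
    show ?thesis
    proof (cases x)
      case (Inl a)
      then have "a \<in> lower" using x cut_covers by auto
      then show ?thesis using Inl e(3) by simp
    next
      case (Inr Z)
      then have Z: "Z \<in> U" using x cut_covers by auto
      have "e \<notin> Z"
      proof
        assume "e \<in> Z"
        have "z \<sqsubseteq> e" if z: "z \<in> Z" for z
        proof (rule ccontr)
          assume "\<not> z \<sqsubseteq> e"
          then have "Inl z \<in> Y'" using e(3) Inl_in_upper unsaturated_cutD(1)[OF Z] z by blast
          then have "Inr Z \<preceq> Inl z" using cut_le x Inr by blast
          then show False using z by simp
        qed
        moreover have "\<forall>y\<in>S - Z. e \<sqsubseteq> y" using unsaturated_cutD(2)[OF Z \<open>e \<in> Z\<close>] by blast
        ultimately show False using unsaturated_cut_no_idempotent[OF Z e(1,2)] by blast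
      qed
      then show ?thesis using Inr by simp
    qed
  qed
next
  fix y assume y: "y \<in> Y'"
  show "Inl e \<preceq> y"
  proof (cases "Inl e \<in> X'")
    case True
    then show ?thesis using cut_le y by blast
  next
    case False
    then have "e \<notin> lower" by simp
    show ?thesis
    proof (cases y)
      case (Inl b)
      then have "b \<in> S - lower" using y cut_covers disjoint by auto
      then show ?thesis using Inl e(4) by simp
    next
      case (Inr Z)
      then have Z: "Z \<in> U" using y cut_covers by auto
      have "e \<in> Z"
      proof (rule ccontr)
        assume "e \<notin> Z"
        have "e \<sqsubseteq> w" if w: "w \<in> S - Z" for w
        proof (rule ccontr)
          assume "\<not> e \<sqsubseteq> w"
          then have "Inl w \<in> X'" using e(4) w by blast
          then have "Inl w \<preceq> Inr Z" using cut_le y Inr by blast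
          then show False using w by simp
        qed
        moreover have "\<forall>z\<in>Z. z \<sqsubseteq> e" using unsaturated_cutD(2)[OF Z] e(1) \<open>e \<notin> Z\<close> by blast
        ultimately show False using unsaturated_cut_no_idempotent[OF Z e(1,2)] by blast
      qed
      then show ?thesis using Inr by simp
    qed
  qed
qed

end

lemma cut_separated_by_idempotent:
  "\<exists>u\<in>Sat. u \<odot> u = u \<and> (\<forall>x\<in>X'. x \<preceq> u) \<and> (\<forall>y\<in>Y'. u \<preceq> y)"
proof (cases "X' \<inter> Y' = {}")
  case False
  then obtain p where p: "p \<in> X'" "p \<in> Y'" by blast
  then have "p \<in> Sat" "p \<odot> p = p" using cut_covers cut_absorb by blast+
  then show ?thesis using p cut_le by blast
next
  case disjoint: True
  show ?thesis
  proof (cases "saturated_cut A lower (S - lower)")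
    case True
    then obtain e where e: "e \<in> S" "bl_idempotent A e" "\<forall>x\<in>lower. x \<sqsubseteq> e" "\<forall>y\<in>S - lower. e \<sqsubseteq> y"
      unfolding saturated_cut_def by blast
    then have "Inl e \<in> Sat" "Inl e \<odot> Inl e = Inl e" unfolding bl_idempotent_def by simp_all
    with cut_separated_by_old[OF disjoint e] show ?thesis by blast
  next
    case False
    then have "lower \<in> U" using lower_cut[OF disjoint] unfolding unsaturated_cuts_def by blast
    moreover have "Inr lower \<odot> Inr lower = Inr lower" by simp
    ultimately show ?thesis using cut_separated_by_new[OF disjoint] by blast
  qed
qed

end

lemma saturation_saturated_chain: "saturated_chain (saturation A)"
  unfolding saturated_chain_def
proof (intro conjI allI impI)
  fix X' Y' assume cut: "bl_cut (saturation A) X' Y'"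
  then obtain u where u: "u \<in> Sat" "u \<odot> u = u" "\<forall>x\<in>X'. x \<preceq> u" "\<forall>y\<in>Y'. u \<preceq> y"
    using cut_separated_by_idempotent[OF cut] by blast
  have in_Sat: "x \<in> X' \<union> Y' \<Longrightarrow> x \<in> Sat" for x
    using equalityD1[OF cut_covers[OF cut]] by (rule subsetD)
  show "saturated_cut (saturation A) X' Y'"
    unfolding saturated_cut_def bl_idempotent_def
  proof (intro bexI[of _ u] conjI ballI)
    fix x assume "x \<in> X'"
    then show "bl_le (saturation A) x u" using bl_le_saturation[OF in_Sat u(1)] u(3) by blast
  next
    fix y assume "y \<in> Y'"
    then show "bl_le (saturation A) u y" using bl_le_saturation[OF u(1) in_Sat] u(4) by blast
  next
    show "mult (saturation A) u u = u" using u(2) by simp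
  next
    show "u \<in> carrier (saturation A)" using u(1) by simp
  qed
qed (rule saturation_bl_chain)

section \<open>Embedding and idempotent bounds\<close>

lemma Inl_bl_embedding: "bl_embedding A (saturation A) Inl"
  unfolding bl_embedding_def by (auto simp: meet_eq join_eq mult_closed imp_closed)

lemma saturation_new_idempotent: "b \<in> carrier (saturation A) - Inl ` S \<Longrightarrow> bl_idempotent (saturation A) b"
  unfolding bl_idempotent_def by auto

lemma sat_le_idempotent_inf:
  assumes C: "C \<subseteq> S" and inf: "is_bl_inf A C m" and idem: "bl_idempotent A m"
    and z: "z \<in> Sat" "\<forall>c\<in>C. z \<preceq> Inl c"
  shows "z \<preceq> Inl m"
proof (cases z)
  case (Inl a)
  then show ?thesis using inf z unfolding is_bl_inf_def by auto
next
  case (Inr X)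
  then have X: "X \<in> U" using z by simp
  have m: "m \<in> S" using inf unfolding is_bl_inf_def by blast
  have "m \<notin> X"
  proof
    assume "m \<in> X"
    have "x \<sqsubseteq> m" if x: "x \<in> X" for x
    proof -
      have "\<forall>c\<in>C. c \<notin> X" using z Inr by simp
      then have "\<forall>c\<in>C. x \<sqsubseteq> c" using unsaturated_cutD(2)[OF X x] C by blast
      then show ?thesis using inf x unsaturated_cutD(1)[OF X] unfolding is_bl_inf_def by blast
    qed
    moreover have "\<forall>y\<in>S - X. m \<sqsubseteq> y" using unsaturated_cutD(2)[OF X \<open>m \<in> X\<close>] by blast
    ultimately show False using unsaturated_cut_no_idempotent[OF X m idem] by blast
  qed
  then show ?thesis using Inr by simp
qed

lemma sat_le_idempotent_sup:
  assumes C: "C \<subseteq> S" and sup: "is_bl_sup A C m" and idem: "bl_idempotent A m"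
    and z: "z \<in> Sat" "\<forall>c\<in>C. Inl c \<preceq> z"
  shows "Inl m \<preceq> z"
proof (cases z)
  case (Inl a)
  then show ?thesis using sup z unfolding is_bl_sup_def by auto
next
  case (Inr X)
  then have X: "X \<in> U" using z by simp
  have m: "m \<in> S" using sup unfolding is_bl_sup_def by blast
  have "m \<in> X"
  proof (rule ccontr)
    assume "m \<notin> X"
    have "m \<sqsubseteq> y" if y: "y \<in> S - X" for y
    proof -
      have "\<forall>c\<in>C. c \<in> X" using z Inr by simp
      then have "\<forall>c\<in>C. c \<sqsubseteq> y" using unsaturated_cutD(2)[OF X] y by blast
      then show ?thesis using sup y unfolding is_bl_sup_def by blast
    qed
    moreover have "\<forall>x\<in>X. x \<sqsubseteq> m" using unsaturated_cutD(2)[OF X] m \<open>m \<notin> X\<close> by blast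
    ultimately show False using unsaturated_cut_no_idempotent[OF X m idem] by blast
  qed
  then show ?thesis using Inr by simp
qed

lemma Inl_preserves_idempotent_inf:
  assumes C: "C \<subseteq> S" and inf: "is_bl_inf A C m" and idem: "bl_idempotent A m"
  shows "is_bl_inf (saturation A) (Inl ` C) (Inl m)"
proof -
  have m: "m \<in> S" "\<forall>c\<in>C. m \<sqsubseteq> c" using inf unfolding is_bl_inf_def by blast+
  have "bl_le (saturation A) z (Inl m)"
    if "z \<in> Sat" "\<forall>c\<in>C. bl_le (saturation A) z (Inl c)" for z
    using that C m(1) bl_le_saturation sat_le_idempotent_inf[OF C inf idem] by (simp add: subset_iff)
  with m C show ?thesis unfolding is_bl_inf_def by (simp add: bl_le_saturation subset_iff)
qed

lemma Inl_preserves_idempotent_sup: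
  assumes C: "C \<subseteq> S" and sup: "is_bl_sup A C m" and idem: "bl_idempotent A m"
  shows "is_bl_sup (saturation A) (Inl ` C) (Inl m)"
proof -
  have m: "m \<in> S" "\<forall>c\<in>C. c \<sqsubseteq> m" using sup unfolding is_bl_sup_def by blast+
  have "bl_le (saturation A) (Inl m) z"
    if "z \<in> Sat" "\<forall>c\<in>C. bl_le (saturation A) (Inl c) z" for z
    using that C m(1) bl_le_saturation sat_le_idempotent_sup[OF C sup idem] by (simp add: subset_iff)
  with m C show ?thesis unfolding is_bl_sup_def by (simp add: bl_le_saturation subset_iff)
qed

end

theorem mainTheorem9:
  fixes A :: "'a bl"
  assumes "bl_chain A"
  shows "\<exists>(B :: ('a + 'a set) bl) f.
           saturated_chain B \<and> bl_embedding A B f \<and>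
           (\<forall>b\<in>carrier B - f ` carrier A. bl_idempotent B b) \<and>
           (\<forall>C m. C \<subseteq> carrier A \<longrightarrow> is_bl_inf A C m \<longrightarrow> bl_idempotent A m
                 \<longrightarrow> is_bl_inf B (f ` C) (f m)) \<and>
           (\<forall>C m. C \<subseteq> carrier A \<longrightarrow> is_bl_sup A C m \<longrightarrow> bl_idempotent A m
                 \<longrightarrow> is_bl_sup B (f ` C) (f m))"
proof -
  interpret BL_chain A
    using assms unfolding bl_chain_def by unfold_locales blast+
  show ?thesis
    using saturation_saturated_chain Inl_bl_embedding saturation_new_idempotent
      Inl_preserves_idempotent_inf Inl_preserves_idempotent_sup
    by (intro exI[of _ "saturation A"] exI[of _ Inl]) blast
qed

end
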